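(* Let $q_1,q_2$ be positive probability densities on $\mathbb{R}^d$ with unnormalized versions $\tilde q_i=Z_iq_i$ and $r=Z_1/Z_2$. Let $\{T_\phi:\phi\in\mathbb{R}^l\}$ be a family of smooth invertible maps $\mathbb{R}^d\to\mathbb{R}^d$ with smooth inverses, and for each $\phi$ let $q_1^{(\phi)}$ be the density of $T_\phi(\omega)$ for $\omega\sim q_1$, with unnormalized version $\tilde q_1^{(\phi)}(x)=\tilde q_1(T_\phi^{-1}(x))\,|\det J_{T_\phi^{-1}}(x)|$ (so $\tilde q_1^{(\phi)}=Z_1q_1^{(\phi)}$). Fix $n_1,n_2\ge1$, $n=n_1+n_2$, $s_i=n_i/n$. For $\tilde r>0$, $\phi\in\mathbb{R}^l$, define $$G_{s_2}(\tilde r,\phi)=1-\frac{1}{s_2}E_{q_1^{(\phi)}}\!\left[\left(\frac{s_2\tilde q_2(\omega)\tilde r}{s_1\tilde q_1^{(\phi)}(\omega)+s_2\tilde q_2(\omega)\tilde r}\right)^{2}\right]-\frac{1}{s_1}E_{q_2}\!\left[\left(\frac{s_1\tilde q_1^{(\phi)}(\omega)}{s_1\tilde q_1^{(\phi)}(\omega)+s_2\tilde q_2(\omega)\tilde r}\right)^{2}\right].$$ Suppose $(\tilde r^*,\phi^* )$ solves $\min_{\phi\in\mathbb{R}^l}\max_{\tilde r>0}G_{s_2}(\tilde r,\phi)$, i.e. $\phi^*$ minimizes $\phi\mapsto\sup_{\tilde r>0}G_{s_2}(\tilde r,\phi)$ and $\tilde r^*$ attains $\sup_{\tilde r>0}G_{s_2}(\tilde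 r,\phi^* )$. Then $\tilde r^*=r$, $G_{s_2}(\tilde r^*,\phi)=H_{s_2}(q_1^{(\phi)},q_2)$ for every $\phi\in\mathbb{R}^l$, and $\phi^*$ minimizes $\phi\mapsto H_{s_2}(q_1^{(\phi)},q_2)$ over $\mathbb{R}^l$. Consequently $\phi^*$ also minimizes over $\mathbb{R}^l$ the quantity $\frac{1}{ns_1s_2}\left[\left(1-H_{s_2}(q_1^{(\phi)},q_2)\right)^{-1}-1\right]$.
   Context: $H_\pi(p_1,p_2)=1-\int\left(\pi p_1^{-1}+(1-\pi)p_2^{-1}\right)^{-1}d\mu$ is the weighted harmonic divergence. For i.i.d. samples of sizes $n_1,n_2$ from $q_1^{(\phi)}$ and $q_2$, the quantity $\frac{1}{ns_1s_2}[(1-H_{s_2}(q_1^{(\phi)},q_2))^{-1}-1]$ is the first-order term of the asymptotic relative mean square error of the asymptotically optimal Bridge estimator of $r$ based on $\tilde q_1^{(\phi)},\tilde q_2$. *)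

theory Defs
  imports "HOL-Analysis.Analysis"
begin

definition dir_deriv :: "'a::real_normed_vector \<Rightarrow> ('a \<Rightarrow> real) \<Rightarrow> 'a \<Rightarrow> real" where
  "dir_deriv v g x = (THE D. ((\<lambda>t. g (x + t *\<^sub>R v)) has_real_derivative D) (at 0))"

fun iter_pd :: "'a::real_normed_vector list \<Rightarrow> ('a \<Rightarrow> real) \<Rightarrow> 'a \<Rightarrow> real" where
  "iter_pd [] g = g"
| "iter_pd (v # vs) g = dir_deriv v (iter_pd vs g)"

definition smooth_real :: "('a::euclidean_space \<Rightarrow> real) \<Rightarrow> bool" where
  "smooth_real g \<longleftrightarrow>
     (\<forall>vs. set vs \<subseteq> Basis \<longrightarrow>
        continuous_on UNIV (iter_pd vs g) \<and>
        (\<forall>v\<in>Basis. \<forall>x. ((\<lambda>t. iter_pd vs g (x + t *\<^sub>R v)) differentiable (at 0))))"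

definition smooth_map :: "('a::euclidean_space \<Rightarrow> 'b::euclidean_space) \<Rightarrow> bool" where
  "smooth_map f \<longleftrightarrow> (\<forall>b\<in>Basis. smooth_real (\<lambda>x. f x \<bullet> b))"

definition harmonic_div :: "real \<Rightarrow> ('a::euclidean_space \<Rightarrow> real) \<Rightarrow> ('a \<Rightarrow> real) \<Rightarrow> real" where
  "harmonic_div \<pi> p1 p2 =
     1 - (\<integral>x. inverse (\<pi> * inverse (p1 x) + (1 - \<pi>) * inverse (p2 x)) \<partial>lborel)"

text \<open>The objective G: p1, p2 normalized densities, tq1, tq2 unnormalized versions.\<close>
definition bridge_G :: "real \<Rightarrow> real \<Rightarrow> ('a::euclidean_space \<Rightarrow> real) \<Rightarrow> ('a \<Rightarrow> real)
    \<Rightarrow> ('a \<Rightarrow> real) \<Rightarrow> ('a \<Rightarrow> real) \<Rightarrow> real \<Rightarrow> real" where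
  "bridge_G s1 s2 p1 p2 tq1 tq2 rt =
     1 - (1 / s2) * (\<integral>x. p1 x * (s2 * tq2 x * rt / (s1 * tq1 x + s2 * tq2 x * rt))^2 \<partial>lborel)
       - (1 / s1) * (\<integral>x. p2 x * (s1 * tq1 x / (s1 * tq1 x + s2 * tq2 x * rt))^2 \<partial>lborel)"

end

theory Submission
  imports Defs
begin

text \<open>Fix \<open>\<phi>\<close> and write \<open>a\<close> for the unnormalised density \<open>q\<^sub>1\<^sup>(\<^sup>\<phi>\<^sup>)\<close> and \<open>r = Z\<^sub>1/Z\<^sub>2\<close>.
  Pointwise, the integrand of the harmonic divergence equals the \<open>(1/s\<^sub>2, 1/s\<^sub>1)\<close>-weighted
  sum of the two integrands of \<open>G(t, \<phi>)\<close> minus \<open>(t - r)\<^sup>2 w(x)\<close> for an explicit weight \<open>w > 0\<close>, dominated by a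
  multiple of \<open>q\<^sub>2\<close>. Integrating, \<open>H - G(t, \<phi>) = (t - r)\<^sup>2 \<integral> w \<ge> 0\<close> with equality exactly
  at \<open>t = r\<close>. So \<open>sup\<^sub>t G(t, \<phi>) = H\<close> is attained only at \<open>r\<close>, the min-max problem reduces
  to minimising \<open>H\<close>, and the relative MSE is increasing in \<open>H < 1\<close>. Smoothness of \<open>T\<^sub>\<phi>\<close> only serves to make \<open>a\<close> measurable and
  positive: the Jacobian determinant of \<open>T\<^sub>\<phi>\<^sup>-\<^sup>1\<close> is continuous, and nonzero by the chain
  rule applied to \<open>T\<^sub>\<phi> \<circ> T\<^sub>\<phi>\<^sup>-\<^sup>1 = id\<close>.\<close>

lemma has_real_derivative_along_line:
  fixes g :: "'a::real_normed_vector \<Rightarrow> real"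
  assumes "\<And>y. ((\<lambda>t. g (y + t *\<^sub>R b)) has_real_derivative D y) (at 0)"
  shows "((\<lambda>t. g (y + t *\<^sub>R b)) has_real_derivative D (y + t0 *\<^sub>R b)) (at t0)"
proof -
  have "((\<lambda>s. g ((y + t0 *\<^sub>R b) + s *\<^sub>R b)) has_real_derivative D (y + t0 *\<^sub>R b)) (at 0)"
    by (rule assms)
  then have "((\<lambda>s. g (y + (s + t0) *\<^sub>R b)) has_real_derivative D (y + t0 *\<^sub>R b)) (at 0)"
    by (simp add: scaleR_add_left algebra_simps)
  then show ?thesis
    using DERIV_shift[where f = "\<lambda>t. g (y + t *\<^sub>R b)" and x = 0 and z = t0] by simp
qed

lemma mean_value_along_line:
  fixes g :: "'a::real_normed_vector \<Rightarrow> real"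
  assumes "\<And>y. ((\<lambda>t. g (y + t *\<^sub>R b)) has_real_derivative D y) (at 0)"
  shows "\<exists>s. \<bar>s\<bar> \<le> \<bar>t\<bar> \<and> g (y + t *\<^sub>R b) - g y = t * D (y + s *\<^sub>R b)"
proof -
  have deriv: "\<And>u. ((\<lambda>t. g (y + t *\<^sub>R b)) has_real_derivative D (y + u *\<^sub>R b)) (at u)"
    by (rule has_real_derivative_along_line[OF assms])
  consider "t = 0" | "t > 0" | "t < 0" by linarith
  then show ?thesis
  proof cases
    case 1
    then show ?thesis by (intro exI[of _ 0]) simp
  next
    case 2
    from MVT2[OF 2, of "\<lambda>u. g (y + u *\<^sub>R b)" "\<lambda>u. D (y + u *\<^sub>R b)"] deriv
    obtain z where "0 < z" "z < t" "g (y + t *\<^sub>R b) - g (y + 0 *\<^sub>R b) = (t - 0) * D (y + z *\<^sub>R b)"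
      by blast
    then show ?thesis by (intro exI[of _ z]) auto
  next
    case 3
    from MVT2[OF 3, of "\<lambda>u. g (y + u *\<^sub>R b)" "\<lambda>u. D (y + u *\<^sub>R b)"] deriv
    obtain z where "t < z" "z < 0" "g (y + 0 *\<^sub>R b) - g (y + t *\<^sub>R b) = (0 - t) * D (y + z *\<^sub>R b)"
      by blast
    then show ?thesis by (intro exI[of _ z]) (auto simp: algebra_simps)
  qed
qed

lemma inner_sum_subset_Basis:
  fixes f :: "'a::euclidean_space \<Rightarrow> real"
  assumes "S \<subseteq> Basis" "c \<in> Basis"
  shows "(\<Sum>b\<in>S. f b *\<^sub>R b) \<bullet> c = (if c \<in> S then f c else 0)"
proof -
  have "(\<Sum>b\<in>S. f b *\<^sub>R b) \<bullet> c = (\<Sum>b\<in>S. f b * (b \<bullet> c))"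
    by (simp only: inner_sum_left inner_scaleR_left)
  also have "\<dots> = (\<Sum>b\<in>S. if b = c then f c else 0)"
    using assms by (intro sum.cong) (auto simp: inner_Basis)
  also have "\<dots> = (if c \<in> S then f c else 0)"
    using finite_subset[OF assms(1) finite_Basis] by (simp add: sum.delta)
  finally show ?thesis .
qed

lemma abs_inner_partial_sum_le:
  fixes h :: "'a::euclidean_space"
  assumes "insert c S \<subseteq> Basis" "c \<notin> S" "b \<in> Basis" "\<bar>s\<bar> \<le> \<bar>h \<bullet> c\<bar>"
  shows "\<bar>((\<Sum>b\<in>S. (h \<bullet> b) *\<^sub>R b) + s *\<^sub>R c) \<bullet> b\<bar> \<le> \<bar>h \<bullet> b\<bar>"
proof -
  have "((\<Sum>b\<in>S. (h \<bullet> b) *\<^sub>R b) + s *\<^sub>R c) \<bullet> b = (\<Sum>b\<in>S. (h \<bullet> b) *\<^sub>R b) \<bullet> b + s * (c \<bullet> b)"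
    by (simp only: inner_add_left inner_scaleR_left)
  also have "\<dots> = (if b \<in> S then h \<bullet> b else 0) + s * (c \<bullet> b)"
    using assms(1,3) by (simp add: inner_sum_subset_Basis)
  finally show ?thesis
    using assms by (auto simp: inner_Basis)
qed

text \<open>Moving from \<open>x\<close> to \<open>x + h\<close> one coordinate direction at a time, each step is a mean
  value step along a line whose intermediate points stay within \<open>norm h\<close> of \<open>x\<close>.\<close>

lemma increment_estimate_by_partials:
  fixes g :: "'a::euclidean_space \<Rightarrow> real" and D :: "'a \<Rightarrow> 'a \<Rightarrow> real"
  assumes deriv: "\<And>b y. b \<in> Basis \<Longrightarrow> ((\<lambda>t. g (y + t *\<^sub>R b)) has_real_derivative D b y) (at 0)"
    and close: "\<And>b z. b \<in> Basis \<Longrightarrow> norm (z - x) < d \<Longrightarrow> \<bar>D b z - D b x\<bar> \<le> e"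
    and "S \<subseteq> Basis" and h: "norm h < d"
  shows "\<bar>g (x + (\<Sum>b\<in>S. (h \<bullet> b) *\<^sub>R b)) - g x - (\<Sum>b\<in>S. (h \<bullet> b) * D b x)\<bar>
           \<le> e * (\<Sum>b\<in>S. \<bar>h \<bullet> b\<bar>)"
proof -
  have "finite S" using \<open>S \<subseteq> Basis\<close> by (rule finite_subset) simp
  then show ?thesis using \<open>S \<subseteq> Basis\<close>
  proof (induction S rule: finite_induct)
    case empty
    then show ?case by simp
  next
    case (insert c S)
    define y where "y = x + (\<Sum>b\<in>S. (h \<bullet> b) *\<^sub>R b)"
    have c: "c \<in> Basis" using insert.prems by auto
    obtain s where s: "\<bar>s\<bar> \<le> \<bar>h \<bullet> c\<bar>"
      "g (y + (h \<bullet> c) *\<^sub>R c) - g y = (h \<bullet> c) * D c (y + s *\<^sub>R c)"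
      using mean_value_along_line[OF deriv[OF c], where t = "h \<bullet> c" and y = y] by blast
    have "norm ((\<Sum>b\<in>S. (h \<bullet> b) *\<^sub>R b) + s *\<^sub>R c) \<le> norm h"
      using insert.prems insert.hyps(2) s(1)
      by (intro norm_le_componentwise abs_inner_partial_sum_le) auto
    moreover have "y + s *\<^sub>R c - x = (\<Sum>b\<in>S. (h \<bullet> b) *\<^sub>R b) + s *\<^sub>R c"
      by (simp add: y_def)
    ultimately have "norm (y + s *\<^sub>R c - x) \<le> norm h"
      by (simp only:)
    then have "\<bar>D c (y + s *\<^sub>R c) - D c x\<bar> \<le> e"
      using h by (intro close[OF c]) simp
    then have "\<bar>D c (y + s *\<^sub>R c) - D c x\<bar> * \<bar>h \<bullet> c\<bar> \<le> e * \<bar>h \<bullet> c\<bar>"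
      by (rule mult_right_mono) simp
    moreover have "\<bar>(h \<bullet> c) * D c (y + s *\<^sub>R c) - (h \<bullet> c) * D c x\<bar>
        = \<bar>D c (y + s *\<^sub>R c) - D c x\<bar> * \<bar>h \<bullet> c\<bar>"
      by (metis abs_mult mult.commute right_diff_distrib)
    moreover have "x + (\<Sum>b\<in>insert c S. (h \<bullet> b) *\<^sub>R b) = y + (h \<bullet> c) *\<^sub>R c"
      using insert.hyps by (simp add: y_def algebra_simps)
    then have "g (x + (\<Sum>b\<in>insert c S. (h \<bullet> b) *\<^sub>R b)) = g y + (h \<bullet> c) * D c (y + s *\<^sub>R c)"
      using s(2) by simp
    moreover have "\<bar>g y - g x - (\<Sum>b\<in>S. (h \<bullet> b) * D b x)\<bar> \<le> e * (\<Sum>b\<in>S. \<bar>h \<bullet> b\<bar>)"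
      using insert by (simp add: y_def)
    ultimately show ?case
      unfolding sum.insert[OF insert.hyps] distrib_left by arith
  qed
qed

lemma has_derivative_of_continuous_partials:
  fixes g :: "'a::euclidean_space \<Rightarrow> real" and D :: "'a \<Rightarrow> 'a \<Rightarrow> real"
  assumes deriv: "\<And>b y. b \<in> Basis \<Longrightarrow> ((\<lambda>t. g (y + t *\<^sub>R b)) has_real_derivative D b y) (at 0)"
    and cont: "\<And>b. b \<in> Basis \<Longrightarrow> isCont (D b) x"
  shows "(g has_derivative (\<lambda>h. \<Sum>b\<in>Basis. (h \<bullet> b) * D b x)) (at x)"
  unfolding has_derivative_at_alt
proof (intro conjI allI impI)
  show "bounded_linear (\<lambda>h. \<Sum>b\<in>Basis. (h \<bullet> b) * D b x)"
    by (intro bounded_linear_sum bounded_linear_mult_const bounded_linear_inner_left)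
next
  fix e :: real
  assume "e > 0"
  define e' where "e' = e / DIM('a)"
  have "e' > 0" using \<open>e > 0\<close> by (simp add: e'_def)
  have "\<forall>\<^sub>F z in at x. \<forall>b\<in>Basis. dist (D b z) (D b x) < e'"
    using cont \<open>e' > 0\<close> by (intro eventually_ball_finite) (auto simp: continuous_at tendsto_iff)
  then obtain d where "d > 0"
    and d: "\<And>z. z \<noteq> x \<Longrightarrow> dist z x < d \<Longrightarrow> \<forall>b\<in>Basis. dist (D b z) (D b x) < e'"
    unfolding eventually_at by blast
  have close: "\<bar>D b z - D b x\<bar> \<le> e'" if "b \<in> Basis" "norm (z - x) < d" for b z
    using d[of z] that \<open>e' > 0\<close> by (cases "z = x") (auto simp: dist_norm)
  have "norm (g y - g x - (\<Sum>b\<in>Basis. ((y - x) \<bullet> b) * D b x)) \<le> e * norm (y - x)"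
    if y: "norm (y - x) < d" for y
  proof -
    have "norm (g y - g x - (\<Sum>b\<in>Basis. ((y - x) \<bullet> b) * D b x))
        \<le> e' * (\<Sum>b\<in>Basis. \<bar>(y - x) \<bullet> b\<bar>)"
      using increment_estimate_by_partials[OF deriv close order_refl y]
      by (simp add: euclidean_representation)
    also have "\<dots> \<le> e' * (\<Sum>b\<in>(Basis::'a set). norm (y - x))"
      using \<open>e' > 0\<close> by (intro mult_left_mono sum_mono Basis_le_norm) auto
    also have "\<dots> = e * norm (y - x)" by (simp add: e'_def)
    finally show ?thesis .
  qed
  then show "\<exists>d>0. \<forall>y. norm (y - x) < d \<longrightarrow>
      norm (g y - g x - (\<Sum>b\<in>Basis. ((y - x) \<bullet> b) * D b x)) \<le> e * norm (y - x)"
    using \<open>d > 0\<close> by blast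
qed

lemma smooth_real_has_dir_deriv:
  assumes "smooth_real g" "b \<in> Basis"
  shows "((\<lambda>t. g (y + t *\<^sub>R b)) has_real_derivative dir_deriv b g y) (at 0)"
proof -
  have "(\<lambda>t. g (y + t *\<^sub>R b)) differentiable (at 0)"
    using assms(1)[unfolded smooth_real_def, rule_format, of "[]"] assms(2) by simp
  then obtain D where D: "((\<lambda>t. g (y + t *\<^sub>R b)) has_real_derivative D) (at 0)"
    unfolding real_differentiable_def by blast
  then have "dir_deriv b g y = D"
    unfolding dir_deriv_def using DERIV_unique by blast
  with D show ?thesis by simp
qed

lemma smooth_real_continuous_dir_deriv:
  assumes "smooth_real g" "b \<in> Basis"
  shows "continuous_on UNIV (dir_deriv b g)"
  using assms(1)[unfolded smooth_real_def, rule_format, of "[b]"] assms(2) by simp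

lemma smooth_real_has_derivative:
  assumes "smooth_real g"
  shows "(g has_derivative (\<lambda>h. \<Sum>b\<in>Basis. (h \<bullet> b) * dir_deriv b g x)) (at x)"
proof (rule has_derivative_of_continuous_partials)
  fix b y :: 'a
  assume "b \<in> Basis"
  show "((\<lambda>t. g (y + t *\<^sub>R b)) has_real_derivative dir_deriv b g y) (at 0)"
    using assms \<open>b \<in> Basis\<close> by (rule smooth_real_has_dir_deriv)
  show "isCont (dir_deriv b g) x"
    using smooth_real_continuous_dir_deriv[OF assms \<open>b \<in> Basis\<close>]
    by (simp add: continuous_on_eq_continuous_at)
qed

lemma smooth_map_has_derivative:
  assumes "smooth_map f"
  shows "(f has_derivative
           (\<lambda>h. \<Sum>i\<in>Basis. (\<Sum>b\<in>Basis. (h \<bullet> b) * dir_deriv b (\<lambda>y. f y \<bullet> i) x) *\<^sub>R i)) (at x)"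
proof (rule has_derivative_componentwise_within[THEN iffD2], intro ballI)
  fix i :: 'b
  assume "i \<in> Basis"
  then have "((\<lambda>y. f y \<bullet> i) has_derivative
      (\<lambda>h. \<Sum>b\<in>Basis. (h \<bullet> b) * dir_deriv b (\<lambda>y. f y \<bullet> i) x)) (at x)"
    using assms unfolding smooth_map_def by (blast intro: smooth_real_has_derivative)
  then show "((\<lambda>y. f y \<bullet> i) has_derivative
      (\<lambda>h. (\<Sum>i\<in>Basis. (\<Sum>b\<in>Basis. (h \<bullet> b) * dir_deriv b (\<lambda>y. f y \<bullet> i) x) *\<^sub>R i) \<bullet> i)) (at x)"
    using \<open>i \<in> Basis\<close> by simp
qed

lemma smooth_map_differentiable: "smooth_map f \<Longrightarrow> f differentiable (at x)"
  using smooth_map_has_derivative differentiableI by blast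

lemma smooth_map_continuous: "smooth_map f \<Longrightarrow> continuous_on UNIV f"
  using smooth_map_differentiable differentiable_imp_continuous_on differentiable_on_def
  by blast

lemma smooth_map_jacobian_entry:
  fixes g :: "real^'n \<Rightarrow> real^'m"
  assumes "smooth_map g"
  shows "matrix (frechet_derivative g (at x)) $ i $ j = dir_deriv (axis j 1) (\<lambda>y. g y $ i) x"
proof -
  have "matrix (frechet_derivative g (at x)) $ i $ j = frechet_derivative g (at x) (axis j 1) $ i"
    by (simp add: matrix_def)
  also have "\<dots> = frechet_derivative g (at x) (axis j 1) \<bullet> axis i 1"
    by (rule cart_eq_inner_axis)
  also have "\<dots> = (\<Sum>b\<in>Basis. (axis j 1 \<bullet> b) * dir_deriv b (\<lambda>y. g y \<bullet> axis i 1) x)"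
    unfolding frechet_derivative_at[OF smooth_map_has_derivative[OF assms, of x], symmetric]
    by (simp only: inner_sum_left_Basis axis_in_Basis_iff Basis_real_def insertI1)
  also have "\<dots> = dir_deriv (axis j 1) (\<lambda>y. g y \<bullet> axis i 1) x"
    by (simp add: inner_Basis if_distrib[of "\<lambda>c. c * _"] sum.delta cong: if_cong)
  finally show ?thesis by (simp only: cart_eq_inner_axis[symmetric])
qed

lemma smooth_map_continuous_det_jacobian:
  fixes g :: "real^'n \<Rightarrow> real^'n"
  assumes "smooth_map g"
  shows "continuous_on UNIV (\<lambda>x. det (matrix (frechet_derivative g (at x))))"
proof -
  have "smooth_real (\<lambda>y. g y $ i)" for i
    using assms unfolding smooth_map_def cart_eq_inner_axis by simp
  then have entries: "continuous_on UNIV (\<lambda>x. matrix (frechet_derivative g (at x)) $ i $ j)" for i j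
    unfolding smooth_map_jacobian_entry[OF assms] by (simp add: smooth_real_continuous_dir_deriv)
  show ?thesis
    unfolding det_def by (intro continuous_intros entries)
qed

lemma det_jacobian_nonzero_of_left_inverse:
  fixes f g :: "real^'n \<Rightarrow> real^'n"
  assumes "f differentiable (at (g x))" "g differentiable (at x)" "\<And>y. f (g y) = y"
  shows "det (matrix (frechet_derivative g (at x))) \<noteq> 0"
proof -
  define f' g' where "f' = frechet_derivative f (at (g x))" and "g' = frechet_derivative g (at x)"
  have df: "(f has_derivative f') (at (g x))" and dg: "(g has_derivative g') (at x)"
    using assms(1,2) frechet_derivative_works unfolding f'_def g'_def by blast+
  have "f \<circ> g = id" using assms(3) by auto
  then have "(id has_derivative f' \<circ> g') (at x)"
    using diff_chain_at[OF dg df] by simp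
  then have "f' \<circ> g' = id"
    using has_derivative_unique[OF _ has_derivative_id] by blast
  then have "matrix f' ** matrix g' = mat 1"
    using matrix_compose[OF has_derivative_linear[OF dg] has_derivative_linear[OF df]]
    by (simp add: matrix_id_mat_1)
  then have "det (matrix f') * det (matrix g') = 1"
    by (metis det_mul det_I)
  then show ?thesis unfolding g'_def by auto
qed

lemma transformed_density_measurable:
  fixes p :: "real^'n \<Rightarrow> real" and Tinv :: "real^'n \<Rightarrow> real^'n"
  assumes "p \<in> borel_measurable borel" "smooth_map Tinv"
  shows "(\<lambda>x. p (Tinv x) * \<bar>det (matrix (frechet_derivative Tinv (at x)))\<bar>) \<in> borel_measurable borel"
proof -
  have "Tinv \<in> borel_measurable borel"
    using smooth_map_continuous[OF assms(2)] by (rule borel_measurable_continuous_onI)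
  then have "(\<lambda>x. p (Tinv x)) \<in> borel_measurable borel"
    by (rule measurable_compose[OF _ assms(1)])
  moreover have "(\<lambda>x. det (matrix (frechet_derivative Tinv (at x)))) \<in> borel_measurable borel"
    using smooth_map_continuous_det_jacobian[OF assms(2)] by (rule borel_measurable_continuous_onI)
  ultimately show ?thesis by measurable
qed

lemma transformed_density_pos:
  fixes p :: "real^'n \<Rightarrow> real" and T Tinv :: "real^'n \<Rightarrow> real^'n"
  assumes "\<And>y. p y > 0" "smooth_map T" "smooth_map Tinv" "\<And>y. T (Tinv y) = y"
  shows "p (Tinv x) * \<bar>det (matrix (frechet_derivative Tinv (at x)))\<bar> > 0"
proof -
  have "det (matrix (frechet_derivative Tinv (at x))) \<noteq> 0"
    using assms(2-4) by (intro det_jacobian_nonzero_of_left_inverse smooth_map_differentiable)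
  then show ?thesis using assms(1) by simp
qed

lemma integral_pos_of_pos:
  fixes f :: "'a \<Rightarrow> real"
  assumes "emeasure M (space M) \<noteq> 0" "integrable M f" "\<And>x. x \<in> space M \<Longrightarrow> f x > 0"
  shows "integral\<^sup>L M f > 0"
proof -
  have nonneg: "AE x in M. 0 \<le> f x"
    using assms(3) by (auto intro: AE_I2 less_imp_le)
  have "integral\<^sup>L M f \<noteq> 0"
  proof
    assume "integral\<^sup>L M f = 0"
    then have "AE x in M. f x = 0"
      using integral_nonneg_eq_0_iff_AE[OF assms(2) nonneg] by simp
    moreover have "AE x in M. f x \<noteq> 0"
      using assms(3) by (intro AE_I2) (metis less_irrefl)
    ultimately have "AE x in M. False"
      by eventually_elim simp
    then show False
      using assms(1) ae_filter_eq_bot_iff trivial_limit_def by metis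
  qed
  then show ?thesis
    using integral_nonneg_AE[OF nonneg] by simp
qed

lemma integrable_of_nonneg_le:
  fixes f g :: "'a \<Rightarrow> real"
  assumes "integrable M g" "f \<in> borel_measurable M" "\<And>x. 0 \<le> f x" "\<And>x. f x \<le> g x"
  shows "integrable M f"
  using assms by (intro Bochner_Integration.integrable_bound[OF assms(1,2)] AE_I2)
    (metis abs_of_nonneg order_trans real_norm_def)

lemma ratio_to_sum_bounds:
  fixes u v :: real
  assumes "0 < u" "0 < v"
  shows "0 \<le> u / (u + v)" "u / (u + v) \<le> 1" "(u / (u + v))\<^sup>2 \<le> u / (u + v)"
proof -
  show "0 \<le> u / (u + v)" "u / (u + v) \<le> 1" using assms by auto
  then show "(u / (u + v))\<^sup>2 \<le> u / (u + v)"
    using mult_left_le[of "u / (u + v)" "u / (u + v)"] by (simp add: power2_eq_square)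
qed

definition bridge_gap_weight :: "real \<Rightarrow> real \<Rightarrow> real \<Rightarrow> real \<Rightarrow> real \<Rightarrow> real \<Rightarrow> real \<Rightarrow> real" where
  "bridge_gap_weight s1 s2 Z1 Z2 t a q =
     s1 * s2 * a\<^sup>2 * (Z2 * q)\<^sup>2 / (Z1 * (s1 * a + s2 * (Z2 * q) * t)\<^sup>2 * (s1 * a + s2 * Z1 * q))"

context
  fixes a q Z1 Z2 s1 s2 t :: real
  assumes pos: "a > 0" "q > 0" "Z1 > 0" "Z2 > 0" "s1 > 0" "s2 > 0" "t > 0"
begin

lemma bridge_denominator_pos: "s1 * a + s2 * (Z2 * q) * t > 0"
  using pos by (intro add_pos_pos mult_pos_pos)

lemma bridge_integrands_identity:
  assumes "s1 + s2 = 1"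
  shows "inverse (s2 * inverse (a / Z1) + (1 - s2) * inverse q)
       = (1 / s2) * ((a / Z1) * (s2 * (Z2 * q) * t / (s1 * a + s2 * (Z2 * q) * t))\<^sup>2)
         + (1 / s1) * (q * (s1 * a / (s1 * a + s2 * (Z2 * q) * t))\<^sup>2)
         - (t - Z1 / Z2)\<^sup>2 * bridge_gap_weight s1 s2 Z1 Z2 t a q"
proof -
  have E: "s1 * a + s2 * Z1 * q > 0"
    using pos by (intro add_pos_pos mult_pos_pos)
  then have harmonic: "inverse (s2 * inverse (a / Z1) + (1 - s2) * inverse q)
      = a * q / (s1 * a + s2 * Z1 * q)"
    using pos assms by (simp add: field_simps flip: distrib_left)
  show ?thesis
    unfolding harmonic bridge_gap_weight_def using pos E bridge_denominator_pos
    by (simp add: divide_simps power2_eq_square) (simp add: algebra_simps)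
qed

lemma bridge_first_integrand_le:
  "(a / Z1) * (s2 * (Z2 * q) * t / (s1 * a + s2 * (Z2 * q) * t))\<^sup>2 \<le> s2 * Z2 * t / (s1 * Z1) * q"
proof -
  define u v where "u = s2 * (Z2 * q) * t" and "v = s1 * a"
  have "u > 0" "v > 0" using pos by (auto simp: u_def v_def)
  have "(u / (v + u))\<^sup>2 \<le> u / (v + u)"
    using ratio_to_sum_bounds[OF \<open>u > 0\<close> \<open>v > 0\<close>] by (simp add: add.commute)
  also have "\<dots> \<le> u / v" using \<open>u > 0\<close> \<open>v > 0\<close> by (intro divide_left_mono) auto
  finally have "(a / Z1) * (u / (v + u))\<^sup>2 \<le> (a / Z1) * (u / v)"
    using pos by (intro mult_left_mono) auto
  also have "\<dots> = s2 * Z2 * t / (s1 * Z1) * q" using pos by (simp add: u_def v_def field_simps)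
  finally show ?thesis by (simp add: u_def v_def)
qed

lemma bridge_second_ratio_bounds:
  "0 \<le> s1 * a / (s1 * a + s2 * (Z2 * q) * t)" "s1 * a / (s1 * a + s2 * (Z2 * q) * t) \<le> 1"
  using pos by (intro ratio_to_sum_bounds mult_pos_pos; simp)+

lemma bridge_second_integrand_le:
  "q * (s1 * a / (s1 * a + s2 * (Z2 * q) * t))\<^sup>2 \<le> q"
  using pos bridge_second_ratio_bounds mult_left_mono[of _ 1 q] by (simp add: power_le_one)

lemma bridge_gap_weight_pos: "bridge_gap_weight s1 s2 Z1 Z2 t a q > 0"
  using pos unfolding bridge_gap_weight_def
  by (intro divide_pos_pos mult_pos_pos add_pos_pos zero_less_power) auto

lemma bridge_gap_weight_le: "bridge_gap_weight s1 s2 Z1 Z2 t a q \<le> (Z2 / Z1)\<^sup>2 / s1 * q"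
proof -
  define u where "u = (s1 * a / (s1 * a + s2 * (Z2 * q) * t))\<^sup>2"
  define v where "v = s2 * (Z2 * q)\<^sup>2 / (s1 * Z1 * (s1 * a + s2 * Z1 * q))"
  have E: "s1 * a + s2 * Z1 * q > 0"
    using pos by (intro add_pos_pos mult_pos_pos)
  then have "bridge_gap_weight s1 s2 Z1 Z2 t a q = u * v"
    using pos bridge_denominator_pos unfolding bridge_gap_weight_def u_def v_def
    by (simp add: divide_simps power2_eq_square)
  have "0 \<le> u" "u \<le> 1"
    using bridge_second_ratio_bounds unfolding u_def by (auto simp: power_le_one)
  have "v \<le> s2 * (Z2 * q)\<^sup>2 / (s1 * Z1 * (s2 * Z1 * q))"
    unfolding v_def using pos E by (intro divide_left_mono mult_left_mono mult_pos_pos) auto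
  also have "\<dots> = (Z2 / Z1)\<^sup>2 / s1 * q" using pos by (simp add: field_simps power2_eq_square)
  finally have "v \<le> (Z2 / Z1)\<^sup>2 / s1 * q" .
  moreover have "0 \<le> v" using pos by (simp add: v_def)
  ultimately show ?thesis
    using \<open>bridge_gap_weight s1 s2 Z1 Z2 t a q = u * v\<close> \<open>0 \<le> u\<close> \<open>u \<le> 1\<close>
    by (metis mult_left_le_one_le order_trans)
qed

end

locale bridge_densities =
  fixes a q :: "'a::euclidean_space \<Rightarrow> real" and Z1 Z2 s1 s2 :: real
  assumes a_measurable: "a \<in> borel_measurable lborel"
    and q_measurable: "q \<in> borel_measurable lborel"
    and q_integrable: "integrable lborel q"
    and a_pos: "\<And>x. a x > 0" and q_pos: "\<And>x. q x > 0"
    and constants_pos: "Z1 > 0" "Z2 > 0" "s1 > 0" "s2 > 0"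
    and s1_plus_s2: "s1 + s2 = 1"
begin

abbreviation G :: "real \<Rightarrow> real" where
  "G t \<equiv> bridge_G s1 s2 (\<lambda>x. a x / Z1) q a (\<lambda>x. Z2 * q x) t"

abbreviation H :: real where
  "H \<equiv> harmonic_div s2 (\<lambda>x. a x / Z1) q"

abbreviation first_integrand :: "real \<Rightarrow> 'a \<Rightarrow> real" where
  "first_integrand t x \<equiv> (a x / Z1) * (s2 * (Z2 * q x) * t / (s1 * a x + s2 * (Z2 * q x) * t))\<^sup>2"

abbreviation second_integrand :: "real \<Rightarrow> 'a \<Rightarrow> real" where
  "second_integrand t x \<equiv> q x * (s1 * a x / (s1 * a x + s2 * (Z2 * q x) * t))\<^sup>2"

abbreviation harmonic_integrand :: "'a \<Rightarrow> real" where
  "harmonic_integrand x \<equiv> inverse (s2 * inverse (a x / Z1) + (1 - s2) * inverse (q x))"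

abbreviation gap_weight :: "real \<Rightarrow> 'a \<Rightarrow> real" where
  "gap_weight t x \<equiv> bridge_gap_weight s1 s2 Z1 Z2 t (a x) (q x)"

context
  fixes t :: real
  assumes t_pos: "t > 0"
begin

lemma integrable_first_integrand: "integrable lborel (first_integrand t)"
proof (rule integrable_of_nonneg_le)
  show "integrable lborel (\<lambda>x. s2 * Z2 * t / (s1 * Z1) * q x)"
    using q_integrable by simp
  show "first_integrand t \<in> borel_measurable lborel"
    using a_measurable q_measurable by measurable
  show "0 \<le> first_integrand t x" for x
    using a_pos[of x] constants_pos by simp
  show "first_integrand t x \<le> s2 * Z2 * t / (s1 * Z1) * q x" for x
    using a_pos q_pos constants_pos t_pos by (rule bridge_first_integrand_le)
qed

lemma integrable_second_integrand: "integrable lborel (second_integrand t)"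
proof (rule integrable_of_nonneg_le)
  show "integrable lborel q" by (rule q_integrable)
  show "second_integrand t \<in> borel_measurable lborel"
    using a_measurable q_measurable by measurable
  show "0 \<le> second_integrand t x" for x
    using q_pos[of x] by simp
  show "second_integrand t x \<le> q x" for x
    using a_pos q_pos constants_pos t_pos by (rule bridge_second_integrand_le)
qed

lemma integrable_gap_weight: "integrable lborel (gap_weight t)"
proof (rule integrable_of_nonneg_le)
  show "integrable lborel (\<lambda>x. (Z2 / Z1)\<^sup>2 / s1 * q x)"
    using q_integrable by simp
  show "gap_weight t \<in> borel_measurable lborel"
    unfolding bridge_gap_weight_def using a_measurable q_measurable by measurable
  show "0 \<le> gap_weight t x" for x
    using a_pos q_pos constants_pos t_pos by (intro less_imp_le bridge_gap_weight_pos)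
  show "gap_weight t x \<le> (Z2 / Z1)\<^sup>2 / s1 * q x" for x
    using a_pos q_pos constants_pos t_pos by (rule bridge_gap_weight_le)
qed

lemma harmonic_integrand_eq:
  "harmonic_integrand x
     = (1 / s2) * first_integrand t x + (1 / s1) * second_integrand t x - (t - Z1 / Z2)\<^sup>2 * gap_weight t x"
  using a_pos q_pos constants_pos t_pos s1_plus_s2 by (rule bridge_integrands_identity)

lemma integral_gap_weight_pos: "(\<integral>x. gap_weight t x \<partial>lborel) > 0"
  using integrable_gap_weight a_pos q_pos constants_pos t_pos
  by (intro integral_pos_of_pos bridge_gap_weight_pos) simp_all

lemma harmonic_div_minus_bridge_G:
  "H - G t = (t - Z1 / Z2)\<^sup>2 * (\<integral>x. gap_weight t x \<partial>lborel)"
proof -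
  define f1 f2 w where "f1 = first_integrand t" and "f2 = second_integrand t" and "w = gap_weight t"
  have integrable: "integrable lborel f1" "integrable lborel f2" "integrable lborel w"
    unfolding f1_def f2_def w_def
    by (fact integrable_first_integrand integrable_second_integrand integrable_gap_weight)+
  have "H = 1 - (\<integral>x. (1 / s2) * f1 x + (1 / s1) * f2 x - (t - Z1 / Z2)\<^sup>2 * w x \<partial>lborel)"
    unfolding harmonic_div_def harmonic_integrand_eq f1_def f2_def w_def ..
  also have "\<dots> = 1 - ((1 / s2) * integral\<^sup>L lborel f1 + (1 / s1) * integral\<^sup>L lborel f2
                     - (t - Z1 / Z2)\<^sup>2 * integral\<^sup>L lborel w)"
    using integrable by simp
  moreover have "G t = 1 - (1 / s2) * integral\<^sup>L lborel f1 - (1 / s1) * integral\<^sup>L lborel f2"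
    unfolding bridge_G_def f1_def f2_def ..
  ultimately show ?thesis unfolding w_def by simp
qed

lemma bridge_G_le_harmonic_div: "G t \<le> H"
  using harmonic_div_minus_bridge_G integral_gap_weight_pos
  by (metis diff_ge_0_iff_ge less_imp_le zero_le_mult_iff zero_le_power2)

lemma bridge_G_eq_harmonic_div_iff: "G t = H \<longleftrightarrow> t = Z1 / Z2"
  using harmonic_div_minus_bridge_G integral_gap_weight_pos by auto

end

lemma integrable_harmonic_integrand: "integrable lborel harmonic_integrand"
proof -
  have "harmonic_integrand
      = (\<lambda>x. (1 / s2) * first_integrand 1 x + (1 / s1) * second_integrand 1 x
              - (1 - Z1 / Z2)\<^sup>2 * gap_weight 1 x)"
    by (intro ext harmonic_integrand_eq) simp
  moreover have "integrable lborel (\<lambda>x. (1 / s2) * first_integrand 1 x + (1 / s1) * second_integrand 1 x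
              - (1 - Z1 / Z2)\<^sup>2 * gap_weight 1 x)"
    using integrable_first_integrand[of 1] integrable_second_integrand[of 1] integrable_gap_weight[of 1]
    by (intro Bochner_Integration.integrable_diff Bochner_Integration.integrable_add
        Bochner_Integration.integrable_mult_right) simp_all
  ultimately show ?thesis by metis
qed

lemma harmonic_div_less_1: "H < 1"
proof -
  have "harmonic_integrand x > 0" for x
    using a_pos[of x] q_pos[of x] constants_pos s1_plus_s2 by (simp add: add_pos_pos)
  then have "(\<integral>x. harmonic_integrand x \<partial>lborel) > 0"
    using integrable_harmonic_integrand by (intro integral_pos_of_pos) simp_all
  then show ?thesis unfolding harmonic_div_def by simp
qed

lemma SUP_bridge_G: "(SUP t\<in>{0<..}. G t) = H"
proof (rule cSup_eq_maximum)
  have "Z1 / Z2 > 0" using constants_pos by simp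
  then show "H \<in> G ` {0<..}"
    using bridge_G_eq_harmonic_div_iff[of "Z1 / Z2"] by force
  show "y \<le> H" if "y \<in> G ` {0<..}" for y
    using that bridge_G_le_harmonic_div by auto
qed

end

lemma bridge_densities_transformed:
  fixes p q :: "real^'n \<Rightarrow> real" and T Tinv :: "real^'n \<Rightarrow> real^'n"
  assumes "p \<in> borel_measurable borel" "\<And>x. p x > 0"
    and "smooth_map T" "smooth_map Tinv" "\<And>y. T (Tinv y) = y"
    and "q \<in> borel_measurable lborel" "integrable lborel q" "\<And>x. q x > 0"
    and "Z1 > 0" "Z2 > 0" "s1 > 0" "s2 > 0" "s1 + s2 = 1"
  shows "bridge_densities (\<lambda>x. p (Tinv x) * \<bar>det (matrix (frechet_derivative Tinv (at x)))\<bar>)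
           q Z1 Z2 s1 s2"
  using assms transformed_density_measurable[OF assms(1,4)] transformed_density_pos[OF assms(2-5)]
  by unfold_locales simp_all

lemma scaled_inverse_one_minus_mono:
  fixes c x y :: real
  assumes "0 \<le> c" "x \<le> y" "y < 1"
  shows "c * (inverse (1 - x) - 1) \<le> c * (inverse (1 - y) - 1)"
  using assms by (intro mult_left_mono diff_right_mono le_imp_inverse_le) auto

theorem proposition3:
  fixes q1 q2 :: "real^'d \<Rightarrow> real" and Z1 Z2 :: real
    and T Tinv :: "real^'l \<Rightarrow> real^'d \<Rightarrow> real^'d"
    and n1 n2 :: nat and rstar :: real and phistar :: "real^'l"
  defines "n \<equiv> n1 + n2"
  defines "s1 \<equiv> real n1 / real n"
  defines "s2 \<equiv> real n2 / real n"
  defines "r \<equiv> Z1 / Z2"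
  defines "tq1 \<equiv> (\<lambda>x. Z1 * q1 x)"
  defines "tq2 \<equiv> (\<lambda>x. Z2 * q2 x)"
  defines "tq1phi \<equiv> (\<lambda>\<phi> x. tq1 (Tinv \<phi> x) * \<bar>det (matrix (frechet_derivative (Tinv \<phi>) (at x)))\<bar>)"
  defines "q1phi \<equiv> (\<lambda>\<phi> x. tq1phi \<phi> x / Z1)"
  defines "G \<equiv> (\<lambda>rt \<phi>. bridge_G s1 s2 (q1phi \<phi>) q2 (tq1phi \<phi>) tq2 rt)"
  defines "H \<equiv> (\<lambda>\<phi>. harmonic_div s2 (q1phi \<phi>) q2)"
  assumes q1_meas: "q1 \<in> borel_measurable lborel" and q1_pos: "\<forall>x. q1 x > 0"
    and q1_int: "integrable lborel q1" and q1_norm: "(\<integral>x. q1 x \<partial>lborel) = 1"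
    and q2_meas: "q2 \<in> borel_measurable lborel" and q2_pos: "\<forall>x. q2 x > 0"
    and q2_int: "integrable lborel q2" and q2_norm: "(\<integral>x. q2 x \<partial>lborel) = 1"
    and Z_pos: "Z1 > 0" "Z2 > 0"
    and T_smooth: "\<forall>\<phi>. smooth_map (T \<phi>) \<and> smooth_map (Tinv \<phi>)"
    and T_inv: "\<forall>\<phi> x. T \<phi> (Tinv \<phi> x) = x \<and> Tinv \<phi> (T \<phi> x) = x"
    and n_pos: "n1 \<ge> 1" "n2 \<ge> 1"
    and phistar_min: "\<forall>\<phi>. (SUP rt\<in>{0<..}. G rt phistar) \<le> (SUP rt\<in>{0<..}. G rt \<phi>)"
    and rstar_pos: "rstar > 0"
    and rstar_max: "G rstar phistar = (SUP rt\<in>{0<..}. G rt phistar)"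
  shows "rstar = r \<and> (\<forall>\<phi>. G rstar \<phi> = H \<phi>) \<and> (\<forall>\<phi>. H phistar \<le> H \<phi>) \<and>
         (\<forall>\<phi>. 1 / (real n * s1 * s2) * (inverse (1 - H phistar) - 1)
               \<le> 1 / (real n * s1 * s2) * (inverse (1 - H \<phi>) - 1))"
proof -
  have "real n > 0" using n_pos by (simp add: n_def)
  then have s: "s1 > 0" "s2 > 0" "s1 + s2 = 1"
    using n_pos by (auto simp: s1_def s2_def n_def simp flip: add_divide_distrib)
  have "tq1 \<in> borel_measurable borel"
    using q1_meas unfolding tq1_def by measurable
  then have bridge: "bridge_densities (tq1phi \<phi>) q2 Z1 Z2 s1 s2" for \<phi>
    unfolding tq1phi_def using q1_pos q2_meas q2_int q2_pos Z_pos T_smooth T_inv s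
    by (intro bridge_densities_transformed[where T = "T \<phi>"]) (simp_all add: tq1_def)
  have G_unfold: "G rt \<phi> = bridge_G s1 s2 (\<lambda>x. tq1phi \<phi> x / Z1) q2 (tq1phi \<phi>) (\<lambda>x. Z2 * q2 x) rt"
    for rt \<phi>
    unfolding G_def q1phi_def tq2_def ..
  have H_unfold: "H \<phi> = harmonic_div s2 (\<lambda>x. tq1phi \<phi> x / Z1) q2" for \<phi>
    unfolding H_def q1phi_def ..
  note G_eq_H_iff = bridge_densities.bridge_G_eq_harmonic_div_iff[OF bridge, folded G_unfold H_unfold]
  have SUP_G: "(SUP rt\<in>{0<..}. G rt \<phi>) = H \<phi>" for \<phi>
    using bridge_densities.SUP_bridge_G[OF bridge] by (simp add: G_unfold H_unfold)
  have H_less_1: "H \<phi> < 1" for \<phi>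
    using bridge_densities.harmonic_div_less_1[OF bridge] by (simp add: H_unfold)
  have "rstar = r"
    using rstar_max SUP_G G_eq_H_iff[OF rstar_pos] by (simp add: r_def)
  moreover have "\<forall>\<phi>. G rstar \<phi> = H \<phi>"
    using G_eq_H_iff[OF rstar_pos] \<open>rstar = r\<close> by (simp add: r_def)
  moreover have H_min: "\<forall>\<phi>. H phistar \<le> H \<phi>"
    using phistar_min SUP_G by simp
  moreover have "\<forall>\<phi>. 1 / (real n * s1 * s2) * (inverse (1 - H phistar) - 1)
                    \<le> 1 / (real n * s1 * s2) * (inverse (1 - H \<phi>) - 1)"
    using H_min H_less_1 \<open>real n > 0\<close> s by (intro allI scaled_inverse_one_minus_mono) auto
  ultimately show ?thesis by blast
qed

end
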